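(* Let $\mathfrak A$ and $\mathcal A$ be Banach algebras with $\mathcal A$ a commutative Banach $\mathfrak A$-bimodule with compatible actions, and let $X,Y$ be commutative Banach $\mathcal A$-$\mathfrak A$-modules, regarded as left Banach $\mathcal A\widehat\otimes_{\mathfrak A}\mathcal A^{op}$-modules via $(a\otimes b)\cdot x=a\cdot x\cdot b$. (i) If $\phi:X\to Y$ is a bounded $\mathcal A$-$\mathfrak A$-module homomorphism, then $\phi$ is a left $\mathcal A\widehat\otimes_{\mathfrak A}\mathcal A^{op}$-$\mathfrak A$-module homomorphism. (ii) If $Y$ is an essential $\mathcal A$-bimodule and $\varphi:X^*\to Y^*$ is a bounded right $\mathcal A\widehat\otimes_{\mathfrak A}\mathcal A^{op}$-$\mathfrak A$-module homomorphism, then $\varphi$ is an $\mathcal A$-$\mathfrak A$-module homomorphism.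
   Context: Compatible actions: $\alpha\cdot(ab)=(\alpha\cdot a)b$, $(ab)\cdot\alpha=a(b\cdot\alpha)$; commutative means $\alpha\cdot a=a\cdot\alpha$. A Banach $\mathcal A$-$\mathfrak A$-module is a Banach space $X$ which is a Banach $\mathcal A$-bimodule and $\mathfrak A$-bimodule with $\alpha\cdot(a\cdot x)=(\alpha\cdot a)\cdot x$, $a\cdot(\alpha\cdot x)=(a\cdot\alpha)\cdot x$, $a\cdot(x\cdot\alpha)=(a\cdot x)\cdot\alpha$ and analogous right identities; commutative if $\alpha\cdot x=x\cdot\alpha$; $X^*$ has the dual actions. $\mathcal A^{op}$ is $\mathcal A$ with reversed product; $\mathcal A\widehat\otimes_{\mathfrak A}\mathcal A^{op}=(\mathcal A\widehat\otimes\mathcal A)/I$, $I$ the closed span of $a\cdot\alpha\otimes b-a\otimes\alpha\cdot b$, is a Banach algebra with $(a\otimes b)(c\otimes d)=ac\otimes db$ and an $\mathfrak A$-bimodule via $\alpha\cdot(a\otimes b)=(\alpha\cdot a)\otimes b$, $(a\otimes b)\cdot\alpha=a\otimes(b\cdot\alpha)$; the action $(a\otimes b)\cdot x=a\cdot x\cdot b$ is well defined on it. $X^*$ is a right $\mathcal A\widehat\otimes_{\mathfrak A}\mathcal A^{op}$-module via $\langle x,f\cdot m\rangle=\langle m\cdot x,f\rangle$. An $\mathcal A$-$\mathfrak A$-module homomorphism is a map that is both an $\mathcal A$-bimodule and an $\mathfrak A$-bimodule homomorphism; a left (right) $\mathcal A\widehat\otimes_{\mathfrak A}\mathcal A^{op}$-$\mathfrak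 A$-module homomorphism is one that is a left (right) $\mathcal A\widehat\otimes_{\mathfrak A}\mathcal A^{op}$-module homomorphism and an $\mathfrak A$-bimodule homomorphism. $Y$ is an essential $\mathcal A$-bimodule if $\mathrm{span}\{a\cdot y\cdot b\}$ is dense in $Y$. *)

theory Defs
  imports "HOL-Analysis.Analysis"
begin

definition banach_bimodule ::
  "('r::real_normed_algebra \<Rightarrow> 'm::banach \<Rightarrow> 'm) \<Rightarrow> ('m \<Rightarrow> 'r \<Rightarrow> 'm) \<Rightarrow> bool" where
  "banach_bimodule l r \<longleftrightarrow>
     bounded_bilinear l \<and> bounded_bilinear r \<and>
     (\<forall>a b x. l (a * b) x = l a (l b x)) \<and>
     (\<forall>a b x. r x (a * b) = r (r x a) b) \<and>
     (\<forall>a b x. l a (r x b) = r (l a x) b)"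

text \<open>The Banach algebra A (type 'b) is a commutative Banach bimodule over the
  Banach algebra frakA (type 'u) with compatible actions ul, ur.\<close>
definition comm_compat_alg_module ::
  "('u::{real_normed_algebra,banach} \<Rightarrow> 'b::{real_normed_algebra,banach} \<Rightarrow> 'b) \<Rightarrow> ('b \<Rightarrow> 'u \<Rightarrow> 'b) \<Rightarrow> bool" where
  "comm_compat_alg_module ul ur \<longleftrightarrow>
     banach_bimodule ul ur \<and>
     (\<forall>\<alpha> a b. ul \<alpha> (a * b) = ul \<alpha> a * b) \<and>
     (\<forall>\<alpha> a b. ur (a * b) \<alpha> = a * ur b \<alpha>) \<and>
     (\<forall>\<alpha> a. ul \<alpha> a = ur a \<alpha>)"

definition comm_AU_module ::
  "('u::{real_normed_algebra,banach} \<Rightarrow> 'b::{real_normed_algebra,banach} \<Rightarrow> 'b) \<Rightarrow> ('b \<Rightarrow> 'u \<Rightarrow> 'b) \<Rightarrow>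
   ('b \<Rightarrow> 'x::banach \<Rightarrow> 'x) \<Rightarrow> ('x \<Rightarrow> 'b \<Rightarrow> 'x) \<Rightarrow>
   ('u \<Rightarrow> 'x \<Rightarrow> 'x) \<Rightarrow> ('x \<Rightarrow> 'u \<Rightarrow> 'x) \<Rightarrow> bool" where
  "comm_AU_module ul ur al ar fl fr \<longleftrightarrow>
     banach_bimodule al ar \<and> banach_bimodule fl fr \<and>
     (\<forall>\<alpha> a x. fl \<alpha> (al a x) = al (ul \<alpha> a) x) \<and>
     (\<forall>\<alpha> a x. al a (fl \<alpha> x) = al (ur a \<alpha>) x) \<and>
     (\<forall>\<alpha> a x. al a (fr x \<alpha>) = fr (al a x) \<alpha>) \<and>
     (\<forall>\<alpha> a x. ar (fl \<alpha> x) a = fl \<alpha> (ar x a)) \<and>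
     (\<forall>\<alpha> a x. ar (fr x \<alpha>) a = ar x (ul \<alpha> a)) \<and>
     (\<forall>\<alpha> a x. fr (ar x a) \<alpha> = ar x (ur a \<alpha>)) \<and>
     (\<forall>\<alpha> x. fl \<alpha> x = fr x \<alpha>)"

definition essential_bimodule ::
  "('b \<Rightarrow> 'y::real_normed_vector \<Rightarrow> 'y) \<Rightarrow> ('y \<Rightarrow> 'b \<Rightarrow> 'y) \<Rightarrow> bool" where
  "essential_bimodule al ar \<longleftrightarrow> closure (span {al a (ar y b) | a b y. True}) = UNIV"

definition dual_left :: "('x::real_normed_vector \<Rightarrow> 'r \<Rightarrow> 'x) \<Rightarrow> 'r \<Rightarrow> ('x \<Rightarrow>\<^sub>L real) \<Rightarrow> ('x \<Rightarrow>\<^sub>L real)" where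
  "dual_left r a f = Blinfun (\<lambda>x. blinfun_apply f (r x a))"

definition dual_right :: "('r \<Rightarrow> 'x::real_normed_vector \<Rightarrow> 'x) \<Rightarrow> ('x \<Rightarrow>\<^sub>L real) \<Rightarrow> 'r \<Rightarrow> ('x \<Rightarrow>\<^sub>L real)" where
  "dual_right l f a = Blinfun (\<lambda>x. blinfun_apply f (l a x))"

text \<open>Every element of the projective tensor product is the (image of a) sum
  \<Sum> a_n \<otimes> b_n with \<Sum> ||a_n|| ||b_n|| < \<infinity>; elements of the module
  tensor product are classes of such elements. We quantify over these representatives.\<close>
definition ptensor_reps :: "(nat \<Rightarrow> 'b::real_normed_vector \<times> 'b) set" where
  "ptensor_reps = {p. summable (\<lambda>n. norm (fst (p n)) * norm (snd (p n)))}"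

definition tens_act :: "('b \<Rightarrow> 'x::real_normed_vector \<Rightarrow> 'x) \<Rightarrow> ('x \<Rightarrow> 'b \<Rightarrow> 'x) \<Rightarrow> (nat \<Rightarrow> 'b \<times> 'b) \<Rightarrow> 'x \<Rightarrow> 'x" where
  "tens_act al ar p x = (\<Sum>n. al (fst (p n)) (ar x (snd (p n))))"

definition dual_tens_act :: "('b \<Rightarrow> 'x::real_normed_vector \<Rightarrow> 'x) \<Rightarrow> ('x \<Rightarrow> 'b \<Rightarrow> 'x) \<Rightarrow> ('x \<Rightarrow>\<^sub>L real) \<Rightarrow> (nat \<Rightarrow> 'b \<times> 'b) \<Rightarrow> ('x \<Rightarrow>\<^sub>L real)" where
  "dual_tens_act al ar f p = Blinfun (\<lambda>x. blinfun_apply f (tens_act al ar p x))"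

definition bimodule_hom :: "('r \<Rightarrow> 'x \<Rightarrow> 'x) \<Rightarrow> ('x \<Rightarrow> 'r \<Rightarrow> 'x) \<Rightarrow> ('r \<Rightarrow> 'y \<Rightarrow> 'y) \<Rightarrow> ('y \<Rightarrow> 'r \<Rightarrow> 'y) \<Rightarrow> ('x \<Rightarrow> 'y) \<Rightarrow> bool" where
  "bimodule_hom lx rx ly ry \<phi> \<longleftrightarrow> (\<forall>a x. \<phi> (lx a x) = ly a (\<phi> x)) \<and> (\<forall>a x. \<phi> (rx x a) = ry (\<phi> x) a)"

end

theory Submission
  imports Defs
begin

text \<open>Only the A-bimodule structure matters: the frakA-module clauses of both conclusions are
  hypotheses. For (i), a bounded A-bimodule map commutes with each term \<open>a\<^sub>n \<cdot> x \<cdot> b\<^sub>n\<close>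
  and, being continuous, with the absolutely convergent series. For (ii), testing the action
  of an elementary tensor \<open>c \<otimes> d\<close> on \<open>f \<cdot> a\<close> gives \<open>f \<cdot> (c \<otimes> d a)\<close>, so
  \<open>\<psi>(f \<cdot> a)\<close> and \<open>\<psi>(f) \<cdot> a\<close> agree on every \<open>c \<cdot> y \<cdot> d\<close>; by essentiality these
  span a dense subspace of Y.\<close>

lemma bounded_linear_eq_on_dense_span:
  fixes g h :: "'a::real_normed_vector \<Rightarrow> 'b::real_normed_vector"
  assumes "bounded_linear g" "bounded_linear h"
    and eq: "\<And>s. s \<in> S \<Longrightarrow> g s = h s"
    and dense: "closure (span S) = UNIV"
  shows "g y = h y"
proof -
  interpret g: bounded_linear g by fact
  interpret h: bounded_linear h by fact
  let ?E = "{y. g y = h y}"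
  have "subspace ?E"
    by (auto simp: subspace_def g.zero h.zero g.add h.add g.scaleR h.scaleR)
  then have "span S \<subseteq> ?E"
    using eq by (intro span_minimal) auto
  moreover have "closed ?E"
    by (intro closed_Collect_eq continuous_on_id g.continuous_on h.continuous_on)
  ultimately have "closure (span S) \<subseteq> ?E"
    by (rule closure_minimal)
  then show ?thesis
    using dense by auto
qed

definition elementary_tensor :: "'b::real_normed_vector \<Rightarrow> 'b \<Rightarrow> nat \<Rightarrow> 'b \<times> 'b" where
  "elementary_tensor c d = (\<lambda>n. if n = 0 then (c, d) else (0, 0))"

lemma elementary_tensor_in_ptensor_reps: "elementary_tensor c d \<in> ptensor_reps"
proof -
  have "(\<lambda>n. norm (fst (elementary_tensor c d n)) * norm (snd (elementary_tensor c d n)))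
      = (\<lambda>n. if n = 0 then norm c * norm d else 0)"
    by (auto simp: elementary_tensor_def)
  then show ?thesis
    by (simp add: ptensor_reps_def)
qed

lemma tens_act_elementary_tensor:
  assumes "bounded_bilinear al"
  shows "tens_act al ar (elementary_tensor c d) x = al c (ar x d)"
proof -
  interpret bounded_bilinear al by fact
  have "(\<lambda>n. al (fst (elementary_tensor c d n)) (ar x (snd (elementary_tensor c d n))))
      = (\<lambda>n. if n = 0 then al c (ar x d) else 0)"
    by (auto simp: elementary_tensor_def zero_left)
  then show ?thesis
    unfolding tens_act_def using sums_single[of 0 "\<lambda>_. al c (ar x d)"]
    by (simp add: sums_iff)
qed

lemma tens_act_summable:
  fixes al :: "'b::real_normed_vector \<Rightarrow> 'x::banach \<Rightarrow> 'x"
  assumes "bounded_bilinear al" "bounded_bilinear ar" "p \<in> ptensor_reps"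
  shows "summable (\<lambda>n. al (fst (p n)) (ar x (snd (p n))))"
proof -
  obtain K1 where K1: "\<And>a b. norm (al a b) \<le> norm a * norm b * K1" and "K1 > 0"
    using bounded_bilinear.pos_bounded[OF assms(1)] by blast
  obtain K2 where K2: "\<And>a b. norm (ar a b) \<le> norm a * norm b * K2"
    using bounded_bilinear.bounded[OF assms(2)] by blast
  have bound: "norm (al (fst (p n)) (ar x (snd (p n))))
      \<le> norm (fst (p n)) * norm (snd (p n)) * (K1 * norm x * K2)" for n
  proof -
    have "norm (al (fst (p n)) (ar x (snd (p n)))) \<le> norm (fst (p n)) * norm (ar x (snd (p n))) * K1"
      by (rule K1)
    also have "\<dots> \<le> norm (fst (p n)) * (norm x * norm (snd (p n)) * K2) * K1"
      using \<open>K1 > 0\<close> by (intro mult_right_mono mult_left_mono K2) auto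
    finally show ?thesis
      by (simp add: algebra_simps)
  qed
  have "summable (\<lambda>n. norm (fst (p n)) * norm (snd (p n)))"
    using assms(3) by (simp add: ptensor_reps_def)
  then show ?thesis
    by (rule summable_comparison_test'[OF summable_mult2 bound])
qed

lemma bimodule_hom_commutes_tens_act:
  fixes axl :: "'b::real_normed_vector \<Rightarrow> 'x::banach \<Rightarrow> 'x"
  assumes "bounded_linear \<phi>" "bimodule_hom axl axr ayl ayr \<phi>"
    and "bounded_bilinear axl" "bounded_bilinear axr" "p \<in> ptensor_reps"
  shows "\<phi> (tens_act axl axr p x) = tens_act ayl ayr p (\<phi> x)"
proof -
  have "\<phi> (tens_act axl axr p x) = (\<Sum>n. \<phi> (axl (fst (p n)) (axr x (snd (p n)))))"
    unfolding tens_act_def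
    by (rule bounded_linear.suminf[OF assms(1) tens_act_summable[OF assms(3-5)]])
  also have "\<dots> = tens_act ayl ayr p (\<phi> x)"
    using assms(2) by (simp add: tens_act_def bimodule_hom_def)
  finally show ?thesis .
qed

lemma bounded_linear_functional_compose:
  assumes "bounded_linear g"
  shows "bounded_linear (\<lambda>x. blinfun_apply f (g x))"
  using bounded_linear_compose[OF blinfun.bounded_linear_right[of f] assms] by (simp add: o_def)

lemma dual_left_apply:
  assumes "bounded_bilinear r"
  shows "blinfun_apply (dual_left r a f) x = blinfun_apply f (r x a)"
  unfolding dual_left_def
  by (simp add: bounded_linear_Blinfun_apply bounded_linear_functional_compose
      bounded_bilinear.bounded_linear_left[OF assms])

lemma dual_right_apply:
  assumes "bounded_bilinear l"
  shows "blinfun_apply (dual_right l f a) x = blinfun_apply f (l a x)"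
  unfolding dual_right_def
  by (simp add: bounded_linear_Blinfun_apply bounded_linear_functional_compose
      bounded_bilinear.bounded_linear_right[OF assms])

lemma dual_tens_act_elementary_tensor_apply:
  assumes "bounded_bilinear al" "bounded_bilinear ar"
  shows "blinfun_apply (dual_tens_act al ar f (elementary_tensor c d)) x
    = blinfun_apply f (al c (ar x d))"
proof -
  have "bounded_linear (\<lambda>x. al c (ar x d))"
    using bounded_linear_compose[OF bounded_bilinear.bounded_linear_right[OF assms(1)]
        bounded_bilinear.bounded_linear_left[OF assms(2)]]
    by (simp add: o_def)
  then show ?thesis
    unfolding dual_tens_act_def tens_act_elementary_tensor[OF assms(1)]
    by (simp add: bounded_linear_Blinfun_apply bounded_linear_functional_compose)
qed

lemma dual_tens_act_dual_left_elementary_tensor: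
  assumes "banach_bimodule al ar"
  shows "dual_tens_act al ar (dual_left ar a f) (elementary_tensor c d)
    = dual_tens_act al ar f (elementary_tensor c (d * a))"
  using assms
  by (intro blinfun_eqI)
    (simp add: banach_bimodule_def dual_tens_act_elementary_tensor_apply dual_left_apply)

lemma dual_tens_act_dual_right_elementary_tensor:
  assumes "banach_bimodule al ar"
  shows "dual_tens_act al ar (dual_right al f a) (elementary_tensor c d)
    = dual_tens_act al ar f (elementary_tensor (a * c) d)"
  using assms
  by (intro blinfun_eqI)
    (simp add: banach_bimodule_def dual_tens_act_elementary_tensor_apply dual_right_apply)

locale dual_tens_hom =
  fixes axl :: "'b::real_normed_algebra \<Rightarrow> 'x::banach \<Rightarrow> 'x" and axr :: "'x \<Rightarrow> 'b \<Rightarrow> 'x"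
    and ayl :: "'b \<Rightarrow> 'y::banach \<Rightarrow> 'y" and ayr :: "'y \<Rightarrow> 'b \<Rightarrow> 'y"
    and \<psi> :: "('x \<Rightarrow>\<^sub>L real) \<Rightarrow> ('y \<Rightarrow>\<^sub>L real)"
  assumes X: "banach_bimodule axl axr" and Y: "banach_bimodule ayl ayr"
    and essential: "essential_bimodule ayl ayr"
    and commutes: "\<And>f c d. \<psi> (dual_tens_act axl axr f (elementary_tensor c d))
      = dual_tens_act ayl ayr (\<psi> f) (elementary_tensor c d)"
begin

lemma bilinear: "bounded_bilinear axl" "bounded_bilinear axr"
    "bounded_bilinear ayl" "bounded_bilinear ayr"
  using X Y by (auto simp: banach_bimodule_def)

lemma apply_two_sided:
  "blinfun_apply (\<psi> f) (ayl c (ayr y d))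
    = blinfun_apply (\<psi> (dual_tens_act axl axr f (elementary_tensor c d))) y"
  by (simp add: commutes dual_tens_act_elementary_tensor_apply[OF bilinear(3,4)])

lemma eq_on_dense_span:
  assumes "bounded_linear g"
    and "\<And>c d y. blinfun_apply (\<psi> f') (ayl c (ayr y d)) = g (ayl c (ayr y d))"
  shows "blinfun_apply (\<psi> f') y = g y"
proof (rule bounded_linear_eq_on_dense_span[OF blinfun.bounded_linear_right assms(1)])
  show "closure (span {ayl c (ayr y d) | c d y. True}) = UNIV"
    using essential by (simp add: essential_bimodule_def)
  fix s
  assume "s \<in> {ayl c (ayr y d) | c d y. True}"
  then show "blinfun_apply (\<psi> f') s = g s"
    using assms(2) by blast
qed

lemma dual_left_hom: "\<psi> (dual_left axr a f) = dual_left ayr a (\<psi> f)"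
proof (rule blinfun_eqI)
  fix y
  have "blinfun_apply (\<psi> (dual_left axr a f)) y = blinfun_apply (\<psi> f) (ayr y a)"
  proof (rule eq_on_dense_span)
    show "bounded_linear (\<lambda>y. blinfun_apply (\<psi> f) (ayr y a))"
      by (intro bounded_linear_functional_compose bounded_bilinear.bounded_linear_left bilinear)
    fix c d y'
    have "ayr (ayl c (ayr y' d)) a = ayl c (ayr y' (d * a))"
      using Y by (simp add: banach_bimodule_def)
    then show "blinfun_apply (\<psi> (dual_left axr a f)) (ayl c (ayr y' d))
      = blinfun_apply (\<psi> f) (ayr (ayl c (ayr y' d)) a)"
      by (simp add: apply_two_sided dual_tens_act_dual_left_elementary_tensor[OF X])
  qed
  then show "blinfun_apply (\<psi> (dual_left axr a f)) y = blinfun_apply (dual_left ayr a (\<psi> f)) y"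
    by (simp add: dual_left_apply bilinear)
qed

lemma dual_right_hom: "\<psi> (dual_right axl f a) = dual_right ayl (\<psi> f) a"
proof (rule blinfun_eqI)
  fix y
  have "blinfun_apply (\<psi> (dual_right axl f a)) y = blinfun_apply (\<psi> f) (ayl a y)"
  proof (rule eq_on_dense_span)
    show "bounded_linear (\<lambda>y. blinfun_apply (\<psi> f) (ayl a y))"
      by (intro bounded_linear_functional_compose bounded_bilinear.bounded_linear_right bilinear)
    fix c d y'
    have "ayl a (ayl c (ayr y' d)) = ayl (a * c) (ayr y' d)"
      using Y by (simp add: banach_bimodule_def)
    then show "blinfun_apply (\<psi> (dual_right axl f a)) (ayl c (ayr y' d))
      = blinfun_apply (\<psi> f) (ayl a (ayl c (ayr y' d)))"
      by (simp add: apply_two_sided dual_tens_act_dual_right_elementary_tensor[OF X])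
  qed
  then show "blinfun_apply (\<psi> (dual_right axl f a)) y = blinfun_apply (dual_right ayl (\<psi> f) a) y"
    by (simp add: dual_right_apply bilinear)
qed

lemma dual_bimodule_hom: "bimodule_hom (dual_left axr) (dual_right axl) (dual_left ayr) (dual_right ayl) \<psi>"
  by (simp add: bimodule_hom_def dual_left_hom dual_right_hom)

end

theorem proposition4p1:
  fixes ul :: "'u::{real_normed_algebra,banach} \<Rightarrow> 'b::{real_normed_algebra,banach} \<Rightarrow> 'b"
    and ur :: "'b \<Rightarrow> 'u \<Rightarrow> 'b"
    and axl :: "'b \<Rightarrow> 'x::banach \<Rightarrow> 'x" and axr :: "'x \<Rightarrow> 'b \<Rightarrow> 'x"
    and uxl :: "'u \<Rightarrow> 'x \<Rightarrow> 'x" and uxr :: "'x \<Rightarrow> 'u \<Rightarrow> 'x"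
    and ayl :: "'b \<Rightarrow> 'y::banach \<Rightarrow> 'y" and ayr :: "'y \<Rightarrow> 'b \<Rightarrow> 'y"
    and uyl :: "'u \<Rightarrow> 'y \<Rightarrow> 'y" and uyr :: "'y \<Rightarrow> 'u \<Rightarrow> 'y"
  assumes A: "comm_compat_alg_module ul ur"
    and X: "comm_AU_module ul ur axl axr uxl uxr"
    and Y: "comm_AU_module ul ur ayl ayr uyl uyr"
  shows
    "(\<forall>\<phi> :: 'x \<Rightarrow> 'y.
        bounded_linear \<phi> \<and> bimodule_hom axl axr ayl ayr \<phi> \<and> bimodule_hom uxl uxr uyl uyr \<phi>
        \<longrightarrow> (\<forall>p \<in> ptensor_reps. \<forall>x. \<phi> (tens_act axl axr p x) = tens_act ayl ayr p (\<phi> x))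
            \<and> bimodule_hom uxl uxr uyl uyr \<phi>)
     \<and>
     (\<forall>\<psi> :: ('x \<Rightarrow>\<^sub>L real) \<Rightarrow> ('y \<Rightarrow>\<^sub>L real).
        essential_bimodule ayl ayr \<and> bounded_linear \<psi>
        \<and> (\<forall>p \<in> ptensor_reps. \<forall>f. \<psi> (dual_tens_act axl axr f p) = dual_tens_act ayl ayr (\<psi> f) p)
        \<and> bimodule_hom (dual_left uxr) (dual_right uxl) (dual_left uyr) (dual_right uyl) \<psi>
        \<longrightarrow> bimodule_hom (dual_left axr) (dual_right axl) (dual_left ayr) (dual_right ayl) \<psi>
            \<and> bimodule_hom (dual_left uxr) (dual_right uxl) (dual_left uyr) (dual_right uyl) \<psi>)"
proof -
  have X_bimodule: "banach_bimodule axl axr" and Y_bimodule: "banach_bimodule ayl ayr"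
    using X Y by (auto simp: comm_AU_module_def)
  then have "bounded_bilinear axl" "bounded_bilinear axr"
    by (auto simp: banach_bimodule_def)
  then have part_i: "\<phi> (tens_act axl axr p x) = tens_act ayl ayr p (\<phi> x)"
    if "bounded_linear \<phi>" "bimodule_hom axl axr ayl ayr \<phi>" "p \<in> ptensor_reps" for \<phi> :: "'x \<Rightarrow> 'y" and p x
    using that by (intro bimodule_hom_commutes_tens_act)
  have part_ii: "bimodule_hom (dual_left axr) (dual_right axl) (dual_left ayr) (dual_right ayl) \<psi>"
    if "essential_bimodule ayl ayr"
      and "\<forall>p \<in> ptensor_reps. \<forall>f. \<psi> (dual_tens_act axl axr f p) = dual_tens_act ayl ayr (\<psi> f) p"
    for \<psi> :: "('x \<Rightarrow>\<^sub>L real) \<Rightarrow> ('y \<Rightarrow>\<^sub>L real)"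
    using that elementary_tensor_in_ptensor_reps
    by (intro dual_tens_hom.dual_bimodule_hom dual_tens_hom.intro X_bimodule Y_bimodule) auto
  show ?thesis
    using part_i part_ii by blast
qed

end
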